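(* Let $\{M_p\mid p\in P\}$ be a Morse decomposition of a multivector field on a finite simplicial complex $K$, and let $\sigma_1,\dots,\sigma_n$ and $\sigma'_1,\dots,\sigma'_n$ be two Morse fixed admissible enumerations of $K$, with filtered boundary matrices $A$ and $A'$. Let $S$ and $S'$ be the connection matrices output by ConMat on $A$ and $A'$ respectively. Then $S[i,j]=S'[i',j']$ whenever $i,j$ index rows/columns of $S$ and $\sigma'_{i'}=\sigma_i$, $\sigma'_{j'}=\sigma_j$ (in which case $i',j'$ index rows/columns of $S'$).
   Context: $K$ is a finite simplicial complex ($\tau\le\sigma$: $\tau$ is a face of $\sigma$; $\mathrm{cl}(\sigma)=\{\tau:\tau\le\sigma\}$). A multivector field $\mathcal V$ on $K$ is a partition of $K$ into convex sets $V$ (if $\sigma,\tau\in V$ and $\sigma\le\mu\le\tau$ then $\mu\in V$); $[\sigma]_{\mathcal V}$ is the part containing $\sigma$, $F_{\mathcal V}(\sigma)=[\sigma]_{\mathcal V}\cup\mathrm{cl}(\sigma)$, and a path is a sequence $\sigma_1,\dots,\sigma_r$ with $\sigma_k\in F_{\mathcal V}(\sigma_{k-1})$. A Morse decomposition indexed by a finite poset $(P,\le_P)$ is a partition $K=\bigsqcup_{p\in P}M_p$ such that every path from $M_p$ to $M_q$ has $q\le_P p$; $[\sigma]_P$ is the $p$ with $\sigma\in M_p$. An admissible enumeration is $\sigma_1,\dots,\sigma_n$ of all simplices of $K$ such that (a) for some linear extension $\le_{lin}$ of $\le_P$, $i\le j\Rightarrow[\sigma_i]_P\le_{lin}[\sigma_j]_P$;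 (b) if $\sigma_i$ is a proper face of $\sigma_j$ then $i<j$. Two admissible enumerations are Morse fixed if for every $p$ they induce the same order on $M_p$. The filtered boundary matrix is the $n\times n$ $\mathbb Z_2$-matrix with entry $(i,j)$ equal to $1$ iff $\sigma_i$ is a codimension-one face of $\sigma_j$; row/column $i$ represents $\sigma_i$. For a nonzero column $j$ of a matrix $B$, $\mathrm{low}_B(j)$ is the largest $i$ with $B[i,j]=1$. Column (and row) $j$ is homogeneous if nonzero and $\sigma_j$, $\sigma_{\mathrm{low}_B(j)}$ are in the same Morse set; then index $\mathrm{low}_B(j)$ is targetable. $J_h(B)$, $J_t(B)$: sets of homogeneous, targetable indices. Algorithm ConMat on $A$ (in place): for $j=1,\dots,n$: for $i=\mathrm{low}_A(j)$ down to $1$: if $A[i,j]=1$ and some column $s<j$ of the current matrix is homogeneous with $\mathrm{low}_A(s)=i$, add column $s$ to column $j$ (mod 2). With $A_{out}$ the result, let $J=\{1,\dots,n\}\setminus J_h(A_{out})\setminus J_t(A_{out})$; the output $S$ is the submatrix of $A_{out}$ on rows and columns in $J$. *)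

theory Defs
  imports Main
begin

definition simplicial_complex :: "'v set set \<Rightarrow> bool" where
  "simplicial_complex K \<longleftrightarrow> finite K \<and>
     (\<forall>\<sigma>\<in>K. finite \<sigma> \<and> \<sigma> \<noteq> {}) \<and>
     (\<forall>\<sigma>\<in>K. \<forall>\<tau>. \<tau> \<subseteq> \<sigma> \<and> \<tau> \<noteq> {} \<longrightarrow> \<tau> \<in> K)"

definition convex_set :: "'v set set \<Rightarrow> 'v set set \<Rightarrow> bool" where
  "convex_set K A \<longleftrightarrow> (\<forall>\<sigma>\<in>A. \<forall>\<tau>\<in>A. \<forall>\<mu>\<in>K. \<sigma> \<subseteq> \<mu> \<and> \<mu> \<subseteq> \<tau> \<longrightarrow> \<mu> \<in> A)"

definition multivector_field :: "'v set set \<Rightarrow> 'v set set set \<Rightarrow> bool" where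
  "multivector_field K \<V> \<longleftrightarrow>
     (\<forall>A\<in>\<V>. A \<noteq> {} \<and> A \<subseteq> K \<and> convex_set K A) \<and>
     (\<forall>A\<in>\<V>. \<forall>B\<in>\<V>. A \<noteq> B \<longrightarrow> A \<inter> B = {}) \<and>
     \<Union>\<V> = K"

definition mvf_F :: "'v set set \<Rightarrow> 'v set set set \<Rightarrow> 'v set \<Rightarrow> 'v set \<Rightarrow> bool" where
  "mvf_F K \<V> \<sigma> \<tau> \<longleftrightarrow> (\<exists>A\<in>\<V>. \<sigma> \<in> A \<and> \<tau> \<in> A) \<or> (\<tau> \<in> K \<and> \<tau> \<subseteq> \<sigma>)"

definition mvf_path :: "'v set set \<Rightarrow> 'v set set set \<Rightarrow> 'v set list \<Rightarrow> bool" where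
  "mvf_path K \<V> xs \<longleftrightarrow> xs \<noteq> [] \<and> set xs \<subseteq> K \<and>
     (\<forall>k. 0 < k \<and> k < length xs \<longrightarrow> mvf_F K \<V> (xs ! (k - 1)) (xs ! k))"

definition partial_order_on_set :: "'p set \<Rightarrow> ('p \<Rightarrow> 'p \<Rightarrow> bool) \<Rightarrow> bool" where
  "partial_order_on_set P le \<longleftrightarrow>
     (\<forall>p\<in>P. le p p) \<and>
     (\<forall>p\<in>P. \<forall>q\<in>P. le p q \<and> le q p \<longrightarrow> p = q) \<and>
     (\<forall>p\<in>P. \<forall>q\<in>P. \<forall>r\<in>P. le p q \<and> le q r \<longrightarrow> le p r)"

definition morse_decomposition ::
  "'v set set \<Rightarrow> 'v set set set \<Rightarrow> 'p set \<Rightarrow> ('p \<Rightarrow> 'p \<Rightarrow> bool) \<Rightarrow> ('p \<Rightarrow> 'v set set) \<Rightarrow> bool" where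
  "morse_decomposition K \<V> P le M \<longleftrightarrow>
     finite P \<and> partial_order_on_set P le \<and>
     (\<forall>p\<in>P. M p \<subseteq> K) \<and>
     (\<forall>p\<in>P. \<forall>q\<in>P. p \<noteq> q \<longrightarrow> M p \<inter> M q = {}) \<and>
     (\<Union>p\<in>P. M p) = K \<and>
     (\<forall>xs p q. mvf_path K \<V> xs \<and> p \<in> P \<and> q \<in> P \<and> hd xs \<in> M p \<and> last xs \<in> M q \<longrightarrow> le q p)"

definition linear_extension :: "'p set \<Rightarrow> ('p \<Rightarrow> 'p \<Rightarrow> bool) \<Rightarrow> ('p \<Rightarrow> 'p \<Rightarrow> bool) \<Rightarrow> bool" where
  "linear_extension P le lin \<longleftrightarrow> partial_order_on_set P lin \<and>
     (\<forall>p\<in>P. \<forall>q\<in>P. lin p q \<or> lin q p) \<and>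
     (\<forall>p\<in>P. \<forall>q\<in>P. le p q \<longrightarrow> lin p q)"

(* enumeration \<sigma>_1..\<sigma>_n is e restricted to {1..n}, n = card K *)
definition admissible_enum ::
  "'v set set \<Rightarrow> 'p set \<Rightarrow> ('p \<Rightarrow> 'p \<Rightarrow> bool) \<Rightarrow> ('p \<Rightarrow> 'v set set) \<Rightarrow> (nat \<Rightarrow> 'v set) \<Rightarrow> bool" where
  "admissible_enum K P le M e \<longleftrightarrow>
     bij_betw e {1..card K} K \<and>
     (\<exists>lin. linear_extension P le lin \<and>
        (\<forall>i\<in>{1..card K}. \<forall>j\<in>{1..card K}. \<forall>p\<in>P. \<forall>q\<in>P.
           i \<le> j \<and> e i \<in> M p \<and> e j \<in> M q \<longrightarrow> lin p q)) \<and>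
     (\<forall>i\<in>{1..card K}. \<forall>j\<in>{1..card K}. e i \<subset> e j \<longrightarrow> i < j)"

definition morse_fixed ::
  "'v set set \<Rightarrow> 'p set \<Rightarrow> ('p \<Rightarrow> 'v set set) \<Rightarrow> (nat \<Rightarrow> 'v set) \<Rightarrow> (nat \<Rightarrow> 'v set) \<Rightarrow> bool" where
  "morse_fixed K P M e e' \<longleftrightarrow>
     (\<forall>p\<in>P. \<forall>i\<in>{1..card K}. \<forall>j\<in>{1..card K}. \<forall>i'\<in>{1..card K}. \<forall>j'\<in>{1..card K}.
        e i \<in> M p \<and> e j \<in> M p \<and> e' i' = e i \<and> e' j' = e j \<longrightarrow> (i < j \<longleftrightarrow> i' < j'))"

(* Z_2 matrices as boolean-valued functions on index pairs (1-based, rows/cols in {1..n}) *)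
type_synonym z2mat = "nat \<Rightarrow> nat \<Rightarrow> bool"

definition bdry_matrix :: "nat \<Rightarrow> (nat \<Rightarrow> 'v set) \<Rightarrow> z2mat" where
  "bdry_matrix n e = (\<lambda>i j. i \<in> {1..n} \<and> j \<in> {1..n} \<and> e i \<subseteq> e j \<and> card (e i) + 1 = card (e j))"

definition low :: "nat \<Rightarrow> z2mat \<Rightarrow> nat \<Rightarrow> nat" where
  "low n B j = (if \<exists>i\<in>{1..n}. B i j then Max {i\<in>{1..n}. B i j} else 0)"

definition homogeneous ::
  "nat \<Rightarrow> 'p set \<Rightarrow> ('p \<Rightarrow> 'v set set) \<Rightarrow> (nat \<Rightarrow> 'v set) \<Rightarrow> z2mat \<Rightarrow> nat \<Rightarrow> bool" where
  "homogeneous n P M e B j \<longleftrightarrow> j \<in> {1..n} \<and> (\<exists>i\<in>{1..n}. B i j) \<and>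
     (\<exists>p\<in>P. e j \<in> M p \<and> e (low n B j) \<in> M p)"

definition J_h :: "nat \<Rightarrow> 'p set \<Rightarrow> ('p \<Rightarrow> 'v set set) \<Rightarrow> (nat \<Rightarrow> 'v set) \<Rightarrow> z2mat \<Rightarrow> nat set" where
  "J_h n P M e B = {j. homogeneous n P M e B j}"

definition J_t :: "nat \<Rightarrow> 'p set \<Rightarrow> ('p \<Rightarrow> 'v set set) \<Rightarrow> (nat \<Rightarrow> 'v set) \<Rightarrow> z2mat \<Rightarrow> nat set" where
  "J_t n P M e B = low n B ` {j. homogeneous n P M e B j}"

definition add_col :: "z2mat \<Rightarrow> nat \<Rightarrow> nat \<Rightarrow> z2mat" where
  "add_col B s j = (\<lambda>i k. if k = j then B i j \<noteq> B i s else B i k)"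

(* one inner step of ConMat at column j, row i; the (nondeterministic) choice of s is
   resolved by taking the least admissible s *)
definition conmat_step ::
  "nat \<Rightarrow> 'p set \<Rightarrow> ('p \<Rightarrow> 'v set set) \<Rightarrow> (nat \<Rightarrow> 'v set) \<Rightarrow> nat \<Rightarrow> z2mat \<Rightarrow> nat \<Rightarrow> z2mat" where
  "conmat_step n P M e j B i =
     (if B i j \<and> (\<exists>s. 1 \<le> s \<and> s < j \<and> homogeneous n P M e B s \<and> low n B s = i)
      then add_col B (LEAST s. 1 \<le> s \<and> s < j \<and> homogeneous n P M e B s \<and> low n B s = i) j
      else B)"

definition conmat_col ::
  "nat \<Rightarrow> 'p set \<Rightarrow> ('p \<Rightarrow> 'v set set) \<Rightarrow> (nat \<Rightarrow> 'v set) \<Rightarrow> z2mat \<Rightarrow> nat \<Rightarrow> z2mat" where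
  "conmat_col n P M e B j = foldl (conmat_step n P M e j) B (rev [1..<low n B j + 1])"

definition conmat_out ::
  "nat \<Rightarrow> 'p set \<Rightarrow> ('p \<Rightarrow> 'v set set) \<Rightarrow> (nat \<Rightarrow> 'v set) \<Rightarrow> z2mat \<Rightarrow> z2mat" where
  "conmat_out n P M e A = foldl (conmat_col n P M e) A [1..<n + 1]"

definition conmat_J ::
  "nat \<Rightarrow> 'p set \<Rightarrow> ('p \<Rightarrow> 'v set set) \<Rightarrow> (nat \<Rightarrow> 'v set) \<Rightarrow> z2mat \<Rightarrow> nat set" where
  "conmat_J n P M e A =
     (let B = conmat_out n P M e A in {1..n} - J_h n P M e B - J_t n P M e B)"

(* S = submatrix of A_out on rows/columns in J, indexed by the original indices in J *)
definition conmat_S ::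
  "nat \<Rightarrow> 'p set \<Rightarrow> ('p \<Rightarrow> 'v set set) \<Rightarrow> (nat \<Rightarrow> 'v set) \<Rightarrow> z2mat \<Rightarrow> z2mat" where
  "conmat_S n P M e A =
     (\<lambda>i j. if i \<in> conmat_J n P M e A \<and> j \<in> conmat_J n P M e A
            then conmat_out n P M e A i j else False)"

end

theory Submission
  imports Defs
begin

text \<open>Every nonzero entry of a column of the boundary matrix, and of every column produced
  by ConMat, lies in a row whose Morse set is below that of the column. Processing column
  \<open>j\<close>, ConMat adds earlier homogeneous columns from Morse sets below that of \<open>\<sigma>\<^sub>j\<close>, and
  it stops with a column vanishing at the pivots (lowest entries) of all earlier homogeneous
  columns. These pivots are distinct, so the set of added columns is unique: in a
  nonempty symmetric difference the column with the largest pivot would survive at that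
  pivot.

  Let \<open>\<pi>\<close> send \<open>i\<close> to the index of \<open>\<sigma>\<^sub>i\<close> in the second enumeration. Both enumerations
  list the Morse sets compatibly with the partial order, and Morse fixedness preserves the
  order within each Morse set, so \<open>\<pi>\<close> preserves the order of any two indices whose Morse
  sets are comparable. By induction on \<open>j\<close>, the reduced columns, their homogeneity and
  their pivots correspond under \<open>\<pi>\<close>, and uniqueness of the added columns gives the
  correspondence for column \<open>j\<close>.\<close>

section \<open>Lowest entries and mod 2 column sums\<close>

lemma
  assumes "\<exists>i\<in>{1..n}. B i j"
  shows low_in_range: "low n B j \<in> {1..n}"
    and low_entry: "B (low n B j) j"
    and le_low: "r \<in> {1..n} \<Longrightarrow> B r j \<Longrightarrow> r \<le> low n B j"
proof -
  have low_Max: "low n B j = Max {i\<in>{1..n}. B i j}"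
    using assms unfolding low_def by simp
  have "Max {i\<in>{1..n}. B i j} \<in> {i\<in>{1..n}. B i j}"
    using assms by (intro Max_in) auto
  then show "low n B j \<in> {1..n}" "B (low n B j) j"
    unfolding low_Max by auto
  show "r \<in> {1..n} \<Longrightarrow> B r j \<Longrightarrow> r \<le> low n B j"
    unfolding low_Max by simp
qed

lemma low_cong: "(\<And>i. B i s = B' i s) \<Longrightarrow> low n B s = low n B' s"
  unfolding low_def by simp

lemma homogeneous_cong:
  assumes "\<And>i. B i s = B' i s"
  shows "homogeneous n P M e B s = homogeneous n P M e B' s"
proof -
  have "low n B s = low n B' s"
    using assms by (rule low_cong)
  then show ?thesis
    unfolding homogeneous_def using assms by simp
qed

definition col_sum :: "z2mat \<Rightarrow> nat set \<Rightarrow> nat \<Rightarrow> bool" where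
  "col_sum B T i \<longleftrightarrow> odd (card {s\<in>T. B i s})"

lemma col_sum_empty [simp]: "\<not> col_sum B {} i"
  unfolding col_sum_def by simp

lemma col_sum_singleton [simp]: "col_sum B {s} i = B i s"
proof -
  have "{s'\<in>{s}. B i s'} = (if B i s then {s} else {})"
    by auto
  then show ?thesis
    unfolding col_sum_def by simp
qed

lemma col_sum_nonzero:
  assumes "col_sum B T i"
  shows "\<exists>s\<in>T. B i s"
proof -
  have "card {s\<in>T. B i s} \<noteq> 0"
    using assms unfolding col_sum_def by (intro notI) simp
  then have "{s\<in>T. B i s} \<noteq> {}"
    by (metis card.empty)
  then show ?thesis
    by blast
qed

lemma col_sum_cong: "(\<And>s. s \<in> T \<Longrightarrow> B i s = B' i' s) \<Longrightarrow> col_sum B T i = col_sum B' T i'"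
  unfolding col_sum_def by (metis (no_types, lifting) Collect_cong)

lemma col_sum_image:
  assumes "inj_on \<pi> T" and "\<And>s. s \<in> T \<Longrightarrow> B' (\<pi> i) (\<pi> s) = B i s"
  shows "col_sum B' (\<pi> ` T) (\<pi> i) = col_sum B T i"
proof -
  have "{s'\<in>\<pi> ` T. B' (\<pi> i) s'} = \<pi> ` {s\<in>T. B i s}"
    using assms(2) by auto
  moreover have "inj_on \<pi> {s\<in>T. B i s}"
    using assms(1) by (rule inj_on_subset) auto
  ultimately show ?thesis
    unfolding col_sum_def by (simp add: card_image)
qed

lemma col_sum_sym_diff:
  assumes "finite T1" and "finite T2"
  shows "col_sum B ((T1 - T2) \<union> (T2 - T1)) i \<longleftrightarrow> col_sum B T1 i \<noteq> col_sum B T2 i"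
proof -
  let ?c = "\<lambda>T. card {s\<in>T. B i s}"
  have parity: "odd (a + b) \<longleftrightarrow> odd (a + c) \<noteq> odd (b + c)" for a b c :: nat
    by auto
  have "?c T1 = ?c (T1 - T2) + ?c (T1 \<inter> T2)"
    using assms by (subst card_Un_disjoint[symmetric]) (auto intro: arg_cong[where f = card])
  moreover have "?c T2 = ?c (T2 - T1) + ?c (T1 \<inter> T2)"
    using assms by (subst card_Un_disjoint[symmetric]) (auto intro: arg_cong[where f = card])
  moreover have "?c ((T1 - T2) \<union> (T2 - T1)) = ?c (T1 - T2) + ?c (T2 - T1)"
    using assms by (subst card_Un_disjoint[symmetric]) (auto intro: arg_cong[where f = card])
  ultimately show ?thesis
    unfolding col_sum_def by (simp only: parity)
qed

lemma col_sum_toggle: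
  assumes "finite T"
  shows "col_sum B (T - {s} \<union> ({s} - T)) i \<longleftrightarrow> col_sum B T i \<noteq> B i s"
proof -
  have "finite {s}"
    by simp
  from col_sum_sym_diff[OF assms this] show ?thesis
    by (simp only: col_sum_singleton)
qed

lemma col_sum_determined_on_pivots:
  assumes nonzero: "\<And>s. s \<in> H \<Longrightarrow> \<exists>i\<in>{1..n}. F i s"
    and inj: "inj_on (low n F) H"
    and sub: "T1 \<subseteq> H" "T2 \<subseteq> H" and fin: "finite T1" "finite T2"
    and agree: "\<And>s. s \<in> H \<Longrightarrow> col_sum F T1 (low n F s) = col_sum F T2 (low n F s)"
  shows "T1 = T2"
proof (rule ccontr)
  assume "T1 \<noteq> T2"
  define D where "D = (T1 - T2) \<union> (T2 - T1)"
  have D: "finite D" "D \<noteq> {}" "D \<subseteq> H"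
    using \<open>T1 \<noteq> T2\<close> sub fin unfolding D_def by auto
  then have "Max (low n F ` D) \<in> low n F ` D"
    by (intro Max_in) auto
  then obtain s0 where s0: "s0 \<in> D" "low n F s0 = Max (low n F ` D)"
    by (metis imageE)
  have below: "low n F s \<le> low n F s0" if "s \<in> D" for s
    using that D(1) s0(2) by simp
  have s0_H: "s0 \<in> H"
    using s0(1) D(3) by blast
  have pivot_s0: "low n F s0 \<in> {1..n}" "F (low n F s0) s0"
    using nonzero[OF s0_H] by (rule low_in_range, rule low_entry)
  have "{s\<in>D. F (low n F s0) s} = {s0}"
  proof (intro equalityI subsetI)
    fix s assume s: "s \<in> {s\<in>D. F (low n F s0) s}"
    then have "s \<in> H"
      using D(3) by blast
    have "low n F s0 \<le> low n F s"
      using nonzero[OF \<open>s \<in> H\<close>] pivot_s0(1) s by (intro le_low) auto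
    then have "low n F s = low n F s0"
      using below s by (simp add: le_antisym)
    then show "s \<in> {s0}"
      using inj s0_H \<open>s \<in> H\<close> unfolding inj_on_def by blast
  qed (use s0(1) pivot_s0(2) in simp)
  then have "col_sum F D (low n F s0)"
    unfolding col_sum_def by simp
  moreover have "\<not> col_sum F D (low n F s0)"
    unfolding D_def col_sum_sym_diff[OF fin] using agree[OF s0_H] by blast
  ultimately show False
    by contradiction
qed

section \<open>The loops of ConMat\<close>

lemma conmat_step_other_col: "k \<noteq> j \<Longrightarrow> conmat_step n P M e j B r i k = B i k"
  unfolding conmat_step_def add_col_def by simp

lemma conmat_col_other_col: "k \<noteq> j \<Longrightarrow> conmat_col n P M e B j i k = B i k"
proof -
  have "foldl (conmat_step n P M e j) B rs i k = B i k" if "k \<noteq> j" for rs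
    using that by (induction rs arbitrary: B) (simp_all add: conmat_step_other_col)
  then show "k \<noteq> j \<Longrightarrow> conmat_col n P M e B j i k = B i k"
    unfolding conmat_col_def by blast
qed

definition conmat_stage ::
  "nat \<Rightarrow> 'p set \<Rightarrow> ('p \<Rightarrow> 'v set set) \<Rightarrow> (nat \<Rightarrow> 'v set) \<Rightarrow> z2mat \<Rightarrow> nat \<Rightarrow> z2mat" where
  "conmat_stage n P M e A k = foldl (conmat_col n P M e) A [1..<k + 1]"

lemma conmat_stage_0 [simp]: "conmat_stage n P M e A 0 = A"
  unfolding conmat_stage_def by simp

lemma conmat_stage_Suc:
  "conmat_stage n P M e A (Suc k) = conmat_col n P M e (conmat_stage n P M e A k) (Suc k)"
  unfolding conmat_stage_def by simp

lemma conmat_stage_col: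
  "conmat_stage n P M e A k i c = (if 1 \<le> c \<and> c \<le> k then conmat_stage n P M e A c i c else A i c)"
  by (induction k) (auto simp: conmat_stage_Suc conmat_col_other_col le_Suc_eq)

lemma
  assumes "j \<in> {1..n}"
  shows conmat_stage_pred_earlier:
      "1 \<le> c \<Longrightarrow> c < j \<Longrightarrow> conmat_stage n P M e A (j - 1) i c = conmat_out n P M e A i c"
    and conmat_stage_pred_current: "conmat_stage n P M e A (j - 1) i j = A i j"
    and conmat_out_col_eq:
      "conmat_out n P M e A i j = conmat_col n P M e (conmat_stage n P M e A (j - 1)) j i j"
proof -
  have out: "conmat_out n P M e A i c = conmat_stage n P M e A c i c" if "c \<in> {1..n}" for c
    using that conmat_stage_col[of n P M e A n i c]
    unfolding conmat_out_def conmat_stage_def[symmetric] by simp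
  show "1 \<le> c \<Longrightarrow> c < j \<Longrightarrow> conmat_stage n P M e A (j - 1) i c = conmat_out n P M e A i c"
    using assms by (subst conmat_stage_col) (auto simp: out)
  show "conmat_stage n P M e A (j - 1) i j = A i j"
    using assms by (subst conmat_stage_col) auto
  have "Suc (j - 1) = j"
    using assms by simp
  then show "conmat_out n P M e A i j = conmat_col n P M e (conmat_stage n P M e A (j - 1)) j i j"
    using out[OF assms] conmat_stage_Suc[of n P M e A "j - 1"] by simp
qed

section \<open>ConMat on one admissible enumeration\<close>

definition morse_index :: "'p set \<Rightarrow> ('p \<Rightarrow> 'v set set) \<Rightarrow> 'v set \<Rightarrow> 'p" where
  "morse_index P M \<sigma> = (THE p. p \<in> P \<and> \<sigma> \<in> M p)"

lemma morse_index_eq: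
  assumes "morse_decomposition K V P le M" and "p \<in> P" and "\<sigma> \<in> M p"
  shows "morse_index P M \<sigma> = p"
  unfolding morse_index_def
proof (rule the_equality)
  show "\<And>q. q \<in> P \<and> \<sigma> \<in> M q \<Longrightarrow> q = p"
    using assms unfolding morse_decomposition_def by blast
qed (use assms in blast)

lemma morse_index_in:
  assumes "morse_decomposition K V P le M" and "\<sigma> \<in> K"
  shows "morse_index P M \<sigma> \<in> P" and "\<sigma> \<in> M (morse_index P M \<sigma>)"
proof -
  obtain p where "p \<in> P" "\<sigma> \<in> M p"
    using assms unfolding morse_decomposition_def by blast
  then show "morse_index P M \<sigma> \<in> P" "\<sigma> \<in> M (morse_index P M \<sigma>)"
    using morse_index_eq[OF assms(1)] by simp_all
qed

locale admissible_enumeration =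
  fixes K :: "'v set set" and V :: "'v set set set" and P :: "'p set"
    and le :: "'p \<Rightarrow> 'p \<Rightarrow> bool" and M :: "'p \<Rightarrow> 'v set set" and e :: "nat \<Rightarrow> 'v set"
  assumes morse: "morse_decomposition K V P le M"
    and admissible: "admissible_enum K P le M e"
begin

abbreviation "n \<equiv> card K"
abbreviation "label i \<equiv> morse_index P M (e i)"
abbreviation "A \<equiv> bdry_matrix n e"
abbreviation "A_out \<equiv> conmat_out n P M e A"

lemma bij_enum: "bij_betw e {1..n} K"
  using admissible unfolding admissible_enum_def by blast

lemma enum_in: "i \<in> {1..n} \<Longrightarrow> e i \<in> K"
  using bij_enum by (rule bij_betw_apply)

lemma label_in: "i \<in> {1..n} \<Longrightarrow> label i \<in> P"
  using morse_index_in(1)[OF morse enum_in] .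

lemma in_morse_set_label: "i \<in> {1..n} \<Longrightarrow> e i \<in> M (label i)"
  using morse_index_in(2)[OF morse enum_in] .

lemma label_eqI: "p \<in> P \<Longrightarrow> e i \<in> M p \<Longrightarrow> label i = p"
  using morse_index_eq[OF morse] .

lemma partial_order: "partial_order_on_set P le"
  using morse unfolding morse_decomposition_def by blast

lemma label_le_trans:
  assumes "i \<in> {1..n}" "j \<in> {1..n}" "k \<in> {1..n}"
    and "le (label i) (label j)" "le (label j) (label k)"
  shows "le (label i) (label k)"
  using partial_order assms label_in unfolding partial_order_on_set_def by blast

lemma less_if_label_less:
  assumes i: "i \<in> {1..n}" and j: "j \<in> {1..n}"
    and "le (label i) (label j)" and "label i \<noteq> label j"
  shows "i < j"
proof (rule ccontr)
  assume "\<not> i < j"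
  obtain lin where lin: "linear_extension P le lin"
    and ord: "\<And>i j p q. i \<in> {1..n} \<Longrightarrow> j \<in> {1..n} \<Longrightarrow> p \<in> P \<Longrightarrow> q \<in> P \<Longrightarrow>
                i \<le> j \<Longrightarrow> e i \<in> M p \<Longrightarrow> e j \<in> M q \<Longrightarrow> lin p q"
    using admissible unfolding admissible_enum_def by blast
  have "lin (label j) (label i)"
    using ord[OF j i] \<open>\<not> i < j\<close> i j label_in in_morse_set_label by simp
  moreover have "lin (label i) (label j)"
    using lin assms(3) i j label_in unfolding linear_extension_def by blast
  ultimately show False
    using lin assms(4) i j label_in
    unfolding linear_extension_def partial_order_on_set_def by blast
qed

lemma bdry_label_le:
  assumes i: "i \<in> {1..n}" and j: "j \<in> {1..n}" and "A i j"
  shows "le (label i) (label j)"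
proof -
  have "e i \<subseteq> e j"
    using \<open>A i j\<close> unfolding bdry_matrix_def by blast
  then have "mvf_path K V [e j, e i]"
    unfolding mvf_path_def mvf_F_def using enum_in[OF i] enum_in[OF j]
    by (auto simp: less_Suc_eq)
  then show ?thesis
    using morse label_in[OF i] label_in[OF j] in_morse_set_label[OF i] in_morse_set_label[OF j]
    unfolding morse_decomposition_def by fastforce
qed

lemma homogeneous_iff:
  "homogeneous n P M e B j \<longleftrightarrow>
     j \<in> {1..n} \<and> (\<exists>i\<in>{1..n}. B i j) \<and> label (low n B j) = label j"
  unfolding homogeneous_def
  by (metis label_eqI label_in in_morse_set_label low_in_range)

definition descending_col :: "z2mat \<Rightarrow> nat \<Rightarrow> bool" where
  "descending_col B c \<longleftrightarrow> (\<forall>i\<in>{1..n}. B i c \<longrightarrow> le (label i) (label c))"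

lemma homogeneous_iff_block_entry:
  assumes "descending_col B c" and c: "c \<in> {1..n}"
  shows "homogeneous n P M e B c \<longleftrightarrow> (\<exists>i\<in>{1..n}. B i c \<and> label i = label c)"
proof
  assume "homogeneous n P M e B c"
  then show "\<exists>i\<in>{1..n}. B i c \<and> label i = label c"
    unfolding homogeneous_iff using low_in_range low_entry by blast
next
  assume "\<exists>i\<in>{1..n}. B i c \<and> label i = label c"
  then obtain i where i: "i \<in> {1..n}" "B i c" "label i = label c"
    by blast
  then have nonzero: "\<exists>i\<in>{1..n}. B i c"
    by blast
  then have low: "low n B c \<in> {1..n}" "B (low n B c) c"
    by (rule low_in_range, rule low_entry)
  have "i \<le> low n B c"
    using nonzero i(1,2) by (rule le_low)
  have "label (low n B c) = label c"
  proof (rule ccontr)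
    assume "label (low n B c) \<noteq> label c"
    moreover have "le (label (low n B c)) (label c)"
      using assms(1) low(1,2) unfolding descending_col_def by blast
    ultimately have "low n B c < i"
      using less_if_label_less[OF low(1) i(1)] i(3) by simp
    with \<open>i \<le> low n B c\<close> show False
      by simp
  qed
  then show "homogeneous n P M e B c"
    unfolding homogeneous_iff using c nonzero by blast
qed

lemma descending_col_sumI:
  assumes j: "j \<in> {1..n}" and "descending_col B j"
    and T: "\<And>s. s \<in> T \<Longrightarrow> s \<in> {1..n} \<and> descending_col G s \<and> le (label s) (label j)"
    and C: "\<And>i. i \<in> {1..n} \<Longrightarrow> C i j = (B i j \<noteq> col_sum G T i)"
  shows "descending_col C j"
  unfolding descending_col_def
proof (intro ballI impI)
  fix i assume i: "i \<in> {1..n}" and "C i j"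
  then consider "B i j" | "col_sum G T i"
    using C by blast
  then show "le (label i) (label j)"
  proof cases
    case 1
    then show ?thesis
      using assms(2) i unfolding descending_col_def by blast
  next
    case 2
    then obtain s where "s \<in> T" "G i s"
      using col_sum_nonzero by blast
    then show ?thesis
      using T[of s] i j label_le_trans unfolding descending_col_def by blast
  qed
qed

definition reducers :: "z2mat \<Rightarrow> nat \<Rightarrow> nat set" where
  "reducers B j = {s. 1 \<le> s \<and> s < j \<and> homogeneous n P M e B s \<and> le (label s) (label j)}"

definition pivots :: "z2mat \<Rightarrow> nat \<Rightarrow> nat set" where
  "pivots B j = low n B ` {s. 1 \<le> s \<and> s < j \<and> homogeneous n P M e B s}"

lemma reducers_in_range: "s \<in> reducers B j \<Longrightarrow> s \<in> {1..n}"
  unfolding reducers_def homogeneous_def by blast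

lemma pivots_in_range: "r \<in> pivots B j \<Longrightarrow> r \<in> {1..n}"
  unfolding pivots_def homogeneous_def using low_in_range by blast

lemma
  assumes "\<And>i s. 1 \<le> s \<Longrightarrow> s < j \<Longrightarrow> B i s = B' i s"
  shows reducers_cong: "reducers B j = reducers B' j"
    and pivots_cong: "pivots B j = pivots B' j"
proof -
  have "homogeneous n P M e B s = homogeneous n P M e B' s \<and> low n B s = low n B' s"
    if "1 \<le> s" "s < j" for s
  proof -
    have col: "\<And>i. B i s = B' i s"
      by (rule assms[OF that])
    show ?thesis
      using homogeneous_cong[where B = B and B' = B', OF col] low_cong[where B = B and B' = B', OF col]
      by blast
  qed
  then show "reducers B j = reducers B' j" "pivots B j = pivots B' j"
    unfolding reducers_def pivots_def by (auto simp: image_def)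
qed

text \<open>The state \<open>C\<close> of the inner loop of ConMat on column \<open>j\<close>, started from \<open>B\<close>,
  once all rows above \<open>m\<close> have been processed.\<close>
definition reduction_inv :: "nat \<Rightarrow> z2mat \<Rightarrow> nat \<Rightarrow> z2mat \<Rightarrow> bool" where
  "reduction_inv j B m C \<longleftrightarrow>
     (\<forall>i k. k \<noteq> j \<longrightarrow> C i k = B i k) \<and>
     (\<exists>T\<subseteq>reducers B j. finite T \<and> (\<forall>i\<in>{1..n}. C i j = (B i j \<noteq> col_sum B T i))) \<and>
     (\<forall>r\<in>{1..n}. m < r \<longrightarrow> C r j \<longrightarrow> r \<notin> pivots B j)"

lemma reduction_inv_init: "reduction_inv j B (low n B j) B"
  unfolding reduction_inv_def
proof (intro conjI)
  show "\<exists>T\<subseteq>reducers B j. finite T \<and> (\<forall>i\<in>{1..n}. B i j = (B i j \<noteq> col_sum B T i))"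
    by (intro exI[of _ "{}"]) simp
  show "\<forall>r\<in>{1..n}. low n B j < r \<longrightarrow> B r j \<longrightarrow> r \<notin> pivots B j"
  proof (intro ballI impI)
    fix r assume r: "r \<in> {1..n}" "low n B j < r" "B r j"
    then have "r \<le> low n B j"
      using le_low by blast
    with r(2) show "r \<notin> pivots B j"
      by simp
  qed
qed simp

lemma reduction_inv_skip:
  assumes "reduction_inv j B (Suc m) C" and "C (Suc m) j \<Longrightarrow> Suc m \<notin> pivots B j"
  shows "reduction_inv j B m C"
  using assms unfolding reduction_inv_def by (metis Suc_lessI)

lemma reduction_inv_add_col:
  assumes inv: "reduction_inv j B (Suc m) C"
    and s0: "1 \<le> s0" "s0 < j" "homogeneous n P M e B s0" "low n B s0 = Suc m"
    and label_s0: "le (label s0) (label j)" and entry: "C (Suc m) j"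
  shows "reduction_inv j B m (add_col C s0 j)"
proof -
  from inv obtain T where T: "T \<subseteq> reducers B j" "finite T"
      and col_j: "\<And>i. i \<in> {1..n} \<Longrightarrow> C i j = (B i j \<noteq> col_sum B T i)"
    unfolding reduction_inv_def by blast
  have other: "\<And>i k. k \<noteq> j \<Longrightarrow> C i k = B i k"
    using inv unfolding reduction_inv_def by blast
  have new_col: "add_col C s0 j i j = (C i j \<noteq> B i s0)" for i
    unfolding add_col_def using other[of s0] s0(2) by simp
  have nonzero: "\<exists>i\<in>{1..n}. B i s0"
    using s0(3) unfolding homogeneous_def by blast
  have sum: "\<exists>T\<subseteq>reducers B j. finite T \<and>
      (\<forall>i\<in>{1..n}. add_col C s0 j i j = (B i j \<noteq> col_sum B T i))"
  proof (intro exI conjI)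
    show "T - {s0} \<union> ({s0} - T) \<subseteq> reducers B j"
      using T(1) s0 label_s0 unfolding reducers_def by auto
    show "\<forall>i\<in>{1..n}. add_col C s0 j i j = (B i j \<noteq> col_sum B (T - {s0} \<union> ({s0} - T)) i)"
      using col_j new_col col_sum_toggle[OF T(2)] by auto
  qed (use T(2) in simp)
  have pivot_free: "\<not> add_col C s0 j r j" if "r \<in> {1..n}" "m < r" "r \<in> pivots B j" for r
  proof (cases "r = Suc m")
    case True
    then show ?thesis
      using new_col entry low_entry[of n B s0, OF nonzero] s0(4) by simp
  next
    case False
    then have "\<not> B r s0"
      using le_low[of n B s0, OF nonzero that(1)] s0(4) that(2) by fastforce
    then show ?thesis
      using inv that False new_col unfolding reduction_inv_def by auto
  qed
  have "\<forall>i k. k \<noteq> j \<longrightarrow> add_col C s0 j i k = B i k"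
    unfolding add_col_def using other by simp
  then show ?thesis
    unfolding reduction_inv_def using sum pivot_free by blast
qed

lemma reduction_inv_descending:
  assumes j: "j \<in> {1..n}"
    and desc: "\<And>s. 1 \<le> s \<Longrightarrow> s \<le> j \<Longrightarrow> descending_col B s"
    and inv: "reduction_inv j B m C"
  shows "descending_col C j"
proof -
  obtain T where T: "T \<subseteq> reducers B j"
      and col_j: "\<And>i. i \<in> {1..n} \<Longrightarrow> C i j = (B i j \<noteq> col_sum B T i)"
    using inv unfolding reduction_inv_def by blast
  show ?thesis
  proof (rule descending_col_sumI[where B = B and G = B and T = T])
    fix s assume "s \<in> T"
    then show "s \<in> {1..n} \<and> descending_col B s \<and> le (label s) (label j)"
      using T desc reducers_in_range unfolding reducers_def by auto
  qed (use j desc col_j in auto)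
qed

lemma reduction_inv_step:
  assumes j: "j \<in> {1..n}"
    and desc: "\<And>s. 1 \<le> s \<Longrightarrow> s \<le> j \<Longrightarrow> descending_col B s"
    and inv: "reduction_inv j B (Suc m) C"
  shows "reduction_inv j B m (conmat_step n P M e j C (Suc m))"
proof -
  have other: "\<And>i k. k \<noteq> j \<Longrightarrow> C i k = B i k"
    using inv unfolding reduction_inv_def by blast
  let ?cand = "\<lambda>s. 1 \<le> s \<and> s < j \<and> homogeneous n P M e C s \<and> low n C s = Suc m"
  have cand_iff: "?cand s \<longleftrightarrow> 1 \<le> s \<and> s < j \<and> homogeneous n P M e B s \<and> low n B s = Suc m" for s
    using other[of s] by (auto simp: homogeneous_cong[of C s B] low_cong[of C s B])
  have ex_cand: "(\<exists>s. ?cand s) \<longleftrightarrow> Suc m \<in> pivots B j"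
    unfolding pivots_def image_iff cand_iff by auto
  show ?thesis
  proof (cases "C (Suc m) j \<and> Suc m \<in> pivots B j")
    case False
    then have "conmat_step n P M e j C (Suc m) = C"
      unfolding conmat_step_def using ex_cand by (intro if_not_P) blast
    then show ?thesis
      using reduction_inv_skip[OF inv] False by simp
  next
    case True
    then have "\<exists>s. ?cand s"
      using ex_cand by blast
    define s0 where "s0 = (LEAST s. ?cand s)"
    have step: "conmat_step n P M e j C (Suc m) = add_col C s0 j"
      unfolding conmat_step_def s0_def using True \<open>\<exists>s. ?cand s\<close> by simp
    have "?cand s0"
      unfolding s0_def using \<open>\<exists>s. ?cand s\<close> by (rule LeastI_ex)
    then have s0: "1 \<le> s0" "s0 < j" "homogeneous n P M e B s0" "low n B s0 = Suc m"
      using cand_iff[of s0] by blast+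
    have "descending_col C j"
      using j desc inv by (rule reduction_inv_descending)
    moreover have "Suc m \<in> {1..n}"
      using True pivots_in_range by blast
    ultimately have "le (label (Suc m)) (label j)"
      using True unfolding descending_col_def by blast
    moreover have "label (Suc m) = label s0"
      using s0(3,4) unfolding homogeneous_iff by simp
    ultimately show ?thesis
      unfolding step using reduction_inv_add_col[OF inv s0] True by simp
  qed
qed

lemma reduction_inv_conmat_col:
  assumes j: "j \<in> {1..n}"
    and desc: "\<And>s. 1 \<le> s \<Longrightarrow> s \<le> j \<Longrightarrow> descending_col B s"
  shows "reduction_inv j B 0 (conmat_col n P M e B j)"
proof -
  have "reduction_inv j B 0 (foldl (conmat_step n P M e j) C (rev [1..<m + 1]))"
    if "reduction_inv j B m C" for m C
    using that
  proof (induction m arbitrary: C)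
    case (Suc m)
    then show ?case
      using reduction_inv_step[OF j desc Suc.prems] by simp
  qed simp
  then show ?thesis
    unfolding conmat_col_def using reduction_inv_init by blast
qed

lemma conmat_out_col_reduced:
  assumes j: "j \<in> {1..n}"
    and desc: "\<And>s. 1 \<le> s \<Longrightarrow> s < j \<Longrightarrow> descending_col A_out s"
  shows "\<exists>T\<subseteq>reducers A_out j. finite T \<and> (\<forall>i\<in>{1..n}. A_out i j = (A i j \<noteq> col_sum A_out T i))"
    and "r \<in> pivots A_out j \<Longrightarrow> \<not> A_out r j"
proof -
  define B where "B = conmat_stage n P M e A (j - 1)"
  have earlier: "\<And>i s. 1 \<le> s \<Longrightarrow> s < j \<Longrightarrow> B i s = A_out i s"
    unfolding B_def using conmat_stage_pred_earlier[OF j] by blast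
  have current: "\<And>i. B i j = A i j"
    unfolding B_def by (rule conmat_stage_pred_current[OF j])
  have out_j: "\<And>i. A_out i j = conmat_col n P M e B j i j"
    unfolding B_def by (rule conmat_out_col_eq[OF j])
  have "descending_col B s" if "1 \<le> s" "s \<le> j" for s
  proof (cases "s = j")
    case True
    then show ?thesis
      using current bdry_label_le j unfolding descending_col_def by simp
  next
    case False
    then show ?thesis
      using desc[of s] earlier[of s] that unfolding descending_col_def by simp
  qed
  then have inv: "reduction_inv j B 0 (conmat_col n P M e B j)"
    by (rule reduction_inv_conmat_col[OF j])
  obtain T where T: "T \<subseteq> reducers B j" "finite T"
      and col_j: "\<And>i. i \<in> {1..n} \<Longrightarrow> conmat_col n P M e B j i j = (B i j \<noteq> col_sum B T i)"
    using inv unfolding reduction_inv_def by blast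
  have same_reducers: "reducers B j = reducers A_out j"
    using earlier by (rule reducers_cong)
  have "col_sum B T i = col_sum A_out T i" for i
    using T(1) earlier unfolding reducers_def by (intro col_sum_cong) auto
  then show "\<exists>T\<subseteq>reducers A_out j. finite T \<and> (\<forall>i\<in>{1..n}. A_out i j = (A i j \<noteq> col_sum A_out T i))"
    using T same_reducers col_j out_j current by auto
  have "pivots B j = pivots A_out j"
    using earlier by (rule pivots_cong)
  then show "r \<in> pivots A_out j \<Longrightarrow> \<not> A_out r j"
    using inv out_j pivots_in_range unfolding reduction_inv_def by fastforce
qed

lemma conmat_out_descending: "j \<in> {1..n} \<Longrightarrow> descending_col A_out j"
proof (induction j rule: less_induct)
  case (less j)
  have "descending_col A_out s" if "1 \<le> s" "s < j" for s
    using less.IH[of s] less.prems that by simp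
  then obtain T where T: "T \<subseteq> reducers A_out j"
      and col_j: "\<And>i. i \<in> {1..n} \<Longrightarrow> A_out i j = (A i j \<noteq> col_sum A_out T i)"
    using conmat_out_col_reduced(1)[OF less.prems] by blast
  show ?case
  proof (rule descending_col_sumI[where B = A and G = A_out and T = T])
    show "descending_col A j"
      using bdry_label_le less.prems unfolding descending_col_def by blast
    fix s assume "s \<in> T"
    then show "s \<in> {1..n} \<and> descending_col A_out s \<and> le (label s) (label j)"
      using T less.IH reducers_in_range unfolding reducers_def by auto
  qed (use less.prems col_j in auto)
qed

lemma conmat_out_col_sum:
  "j \<in> {1..n} \<Longrightarrow>
     \<exists>T\<subseteq>reducers A_out j. finite T \<and> (\<forall>i\<in>{1..n}. A_out i j = (A i j \<noteq> col_sum A_out T i))"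
  using conmat_out_col_reduced(1) conmat_out_descending by simp

lemma conmat_out_pivot_free: "j \<in> {1..n} \<Longrightarrow> r \<in> pivots A_out j \<Longrightarrow> \<not> A_out r j"
  using conmat_out_col_reduced(2) conmat_out_descending by simp

lemma inj_on_low_homogeneous: "inj_on (low n A_out) {s. homogeneous n P M e A_out s}"
proof -
  have "low n A_out a \<noteq> low n A_out b"
    if "homogeneous n P M e A_out a" "homogeneous n P M e A_out b" "a < b" for a b
  proof -
    have "low n A_out a \<in> pivots A_out b" "b \<in> {1..n}"
      using that unfolding pivots_def homogeneous_def by auto
    then show ?thesis
      using conmat_out_pivot_free low_entry that(2) unfolding homogeneous_def by metis
  qed
  then show ?thesis
    by (intro inj_onI) (metis linorder_neqE_nat mem_Collect_eq)
qed

end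

section \<open>Two Morse fixed enumerations\<close>

locale morse_fixed_pair =
  E: admissible_enumeration K V P le M e + E': admissible_enumeration K V P le M e'
  for K :: "'v set set" and V :: "'v set set set" and P :: "'p set"
    and le :: "'p \<Rightarrow> 'p \<Rightarrow> bool" and M :: "'p \<Rightarrow> 'v set set" and e e' :: "nat \<Rightarrow> 'v set" +
  assumes fixed: "morse_fixed K P M e e'"
begin

abbreviation "n \<equiv> card K"

definition \<pi> :: "nat \<Rightarrow> nat" where
  "\<pi> i = inv_into {1..n} e' (e i)"

lemma bij_\<pi>: "bij_betw \<pi> {1..n} {1..n}"
proof -
  have "bij_betw (inv_into {1..n} e' \<circ> e) {1..n} {1..n}"
    using E.bij_enum E'.bij_enum by (meson bij_betw_inv_into bij_betw_trans)
  then show ?thesis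
    unfolding comp_def \<pi>_def[abs_def] .
qed

lemma \<pi>_in: "i \<in> {1..n} \<Longrightarrow> \<pi> i \<in> {1..n}"
  using bij_\<pi> by (rule bij_betw_apply)

lemma \<pi>_surj:
  assumes "i' \<in> {1..n}"
  shows "\<exists>i\<in>{1..n}. \<pi> i = i'"
proof -
  have "i' \<in> \<pi> ` {1..n}"
    using bij_betw_imp_surj_on[OF bij_\<pi>] assms by simp
  then show ?thesis
    by blast
qed

lemma inj_on_\<pi>: "inj_on \<pi> {1..n}"
  using bij_\<pi> by (rule bij_betw_imp_inj_on)

lemma \<pi>_inj: "a \<in> {1..n} \<Longrightarrow> b \<in> {1..n} \<Longrightarrow> \<pi> a = \<pi> b \<Longrightarrow> a = b"
  using inj_on_\<pi> by (rule inj_onD)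

lemma e'_\<pi>:
  assumes "i \<in> {1..n}"
  shows "e' (\<pi> i) = e i"
proof -
  have "e i \<in> e' ` {1..n}"
    using E.enum_in[OF assms] bij_betw_imp_surj_on[OF E'.bij_enum] by simp
  then show ?thesis
    unfolding \<pi>_def by (rule f_inv_into_f)
qed

lemma label_\<pi>: "i \<in> {1..n} \<Longrightarrow> E'.label (\<pi> i) = E.label i"
  by (simp add: e'_\<pi>)

lemma \<pi>_less_iff_same_label:
  assumes s: "s \<in> {1..n}" and j: "j \<in> {1..n}" and "E.label s = E.label j"
  shows "\<pi> s < \<pi> j \<longleftrightarrow> s < j"
proof -
  have "e s \<in> M (E.label j)" "e j \<in> M (E.label j)"
    using E.in_morse_set_label[OF s] E.in_morse_set_label[OF j] assms(3) by simp_all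
  then show ?thesis
    using fixed[unfolded morse_fixed_def, rule_format, OF E.label_in[OF j] s j \<pi>_in[OF s] \<pi>_in[OF j]]
      e'_\<pi>[OF s] e'_\<pi>[OF j] by blast
qed

lemma \<pi>_less_iff:
  assumes s: "s \<in> {1..n}" and j: "j \<in> {1..n}" and "le (E.label s) (E.label j)"
  shows "\<pi> s < \<pi> j \<longleftrightarrow> s < j"
proof (cases "E.label s = E.label j")
  case True
  then show ?thesis
    using \<pi>_less_iff_same_label[OF s j] by blast
next
  case False
  then have "s < j" and "\<pi> s < \<pi> j"
    using assms E.less_if_label_less E'.less_if_label_less[OF \<pi>_in[OF s] \<pi>_in[OF j]]
    by (simp_all add: label_\<pi>)
  then show ?thesis
    by blast
qed

lemma homogeneous_\<pi>:
  assumes s: "s \<in> {1..n}" and col: "\<And>i. i \<in> {1..n} \<Longrightarrow> E.A_out i s = E'.A_out (\<pi> i) (\<pi> s)"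
  shows "homogeneous n P M e' E'.A_out (\<pi> s) \<longleftrightarrow> homogeneous n P M e E.A_out s"
proof -
  have "homogeneous n P M e' E'.A_out (\<pi> s) \<longleftrightarrow>
      (\<exists>i'\<in>{1..n}. E'.A_out i' (\<pi> s) \<and> E'.label i' = E'.label (\<pi> s))"
    using E'.homogeneous_iff_block_entry E'.conmat_out_descending \<pi>_in[OF s] by blast
  also have "\<dots> \<longleftrightarrow> (\<exists>i\<in>{1..n}. E'.A_out (\<pi> i) (\<pi> s) \<and> E'.label (\<pi> i) = E'.label (\<pi> s))"
    using \<pi>_surj \<pi>_in by metis
  also have "\<dots> \<longleftrightarrow> (\<exists>i\<in>{1..n}. E.A_out i s \<and> E.label i = E.label s)"
    using col s by (simp add: label_\<pi>)
  also have "\<dots> \<longleftrightarrow> homogeneous n P M e E.A_out s"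
    using E.homogeneous_iff_block_entry E.conmat_out_descending s by blast
  finally show ?thesis .
qed

lemma low_\<pi>:
  assumes s: "s \<in> {1..n}" and col: "\<And>i. i \<in> {1..n} \<Longrightarrow> E.A_out i s = E'.A_out (\<pi> i) (\<pi> s)"
    and hom: "homogeneous n P M e E.A_out s"
  shows "\<pi> (low n E.A_out s) = low n E'.A_out (\<pi> s)"
proof -
  define l where "l = low n E.A_out s"
  define l' where "l' = low n E'.A_out (\<pi> s)"
  have hom': "homogeneous n P M e' E'.A_out (\<pi> s)"
    using homogeneous_\<pi>[OF s col] hom by blast
  have nonzero: "\<exists>i\<in>{1..n}. E.A_out i s" and nonzero': "\<exists>i\<in>{1..n}. E'.A_out i (\<pi> s)"
    using hom hom' unfolding homogeneous_def by blast+
  have l: "l \<in> {1..n}" "E.A_out l s"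
    unfolding l_def using nonzero by (rule low_in_range, rule low_entry)
  have l': "l' \<in> {1..n}" "E'.A_out l' (\<pi> s)"
    unfolding l'_def using nonzero' by (rule low_in_range, rule low_entry)
  obtain i where i: "i \<in> {1..n}" "\<pi> i = l'"
    using \<pi>_surj[OF l'(1)] by blast
  have "i \<le> l"
    unfolding l_def using nonzero i(1) col[OF i(1)] l'(2) i(2) by (intro le_low) auto
  moreover have "\<pi> l \<le> \<pi> i"
    unfolding i(2) l'_def using nonzero' \<pi>_in[OF l(1)] col[OF l(1)] l(2) by (intro le_low) auto
  moreover have "E.label i = E.label l"
    using hom hom' i label_\<pi> s unfolding E.homogeneous_iff E'.homogeneous_iff l_def l'_def by metis
  ultimately have "i = l"
    using \<pi>_less_iff_same_label[OF i(1) l(1)] by (simp add: not_less le_antisym)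
  then show ?thesis
    using i(2) unfolding l_def l'_def by simp
qed

lemma
  assumes j: "j \<in> {1..n}"
    and cols: "\<And>s i. 1 \<le> s \<Longrightarrow> s < j \<Longrightarrow> i \<in> {1..n} \<Longrightarrow> E.A_out i s = E'.A_out (\<pi> i) (\<pi> s)"
  shows reducers_\<pi>: "E'.reducers E'.A_out (\<pi> j) = \<pi> ` E.reducers E.A_out j"
    and pivots_\<pi>: "s \<in> E.reducers E.A_out j \<Longrightarrow> \<pi> (low n E.A_out s) \<in> E'.pivots E'.A_out (\<pi> j)"
proof -
  have reducer_iff: "\<pi> s \<in> E'.reducers E'.A_out (\<pi> j) \<longleftrightarrow> s \<in> E.reducers E.A_out j"
    if s: "s \<in> {1..n}" for s
  proof (cases "le (E.label s) (E.label j)")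
    case True
    then have "\<pi> s < \<pi> j \<longleftrightarrow> s < j"
      using \<pi>_less_iff[OF s j] by blast
    then show ?thesis
      using True s \<pi>_in[OF s] homogeneous_\<pi>[OF s] cols[of s] label_\<pi>[OF s] label_\<pi>[OF j]
      unfolding E.reducers_def E'.reducers_def by auto
  qed (use label_\<pi>[OF s] label_\<pi>[OF j] in \<open>simp add: E.reducers_def E'.reducers_def\<close>)
  show "E'.reducers E'.A_out (\<pi> j) = \<pi> ` E.reducers E.A_out j"
  proof (intro equalityI subsetI)
    fix s' assume s': "s' \<in> E'.reducers E'.A_out (\<pi> j)"
    then obtain s where "s \<in> {1..n}" "s' = \<pi> s"
      using \<pi>_surj E'.reducers_in_range by blast
    then show "s' \<in> \<pi> ` E.reducers E.A_out j"
      using reducer_iff s' by blast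
  qed (use reducer_iff E.reducers_in_range in blast)
  assume s: "s \<in> E.reducers E.A_out j"
  then have "\<pi> s \<in> E'.reducers E'.A_out (\<pi> j)" "s \<in> {1..n}" "s < j"
    using reducer_iff E.reducers_in_range unfolding E.reducers_def by auto
  moreover have "\<pi> (low n E.A_out s) = low n E'.A_out (\<pi> s)"
    using s low_\<pi> cols E.reducers_in_range unfolding E.reducers_def by blast
  ultimately show "\<pi> (low n E.A_out s) \<in> E'.pivots E'.A_out (\<pi> j)"
    unfolding E'.reducers_def E'.pivots_def by auto
qed

lemma bdry_matrix_\<pi>: "i \<in> {1..n} \<Longrightarrow> j \<in> {1..n} \<Longrightarrow> E'.A (\<pi> i) (\<pi> j) = E.A i j"
  unfolding bdry_matrix_def using \<pi>_in e'_\<pi> by simp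

lemma conmat_out_col_\<pi>_sum:
  assumes j: "j \<in> {1..n}"
    and cols: "\<And>s i. 1 \<le> s \<Longrightarrow> s < j \<Longrightarrow> i \<in> {1..n} \<Longrightarrow> E.A_out i s = E'.A_out (\<pi> i) (\<pi> s)"
  shows "\<exists>T\<subseteq>E.reducers E.A_out j. finite T \<and>
           (\<forall>i\<in>{1..n}. E'.A_out (\<pi> i) (\<pi> j) = (E.A i j \<noteq> col_sum E.A_out T i))"
proof -
  obtain T' where T': "T' \<subseteq> E'.reducers E'.A_out (\<pi> j)"
      and col': "\<And>i. i \<in> {1..n} \<Longrightarrow> E'.A_out i (\<pi> j) = (E'.A i (\<pi> j) \<noteq> col_sum E'.A_out T' i)"
    using E'.conmat_out_col_sum[OF \<pi>_in[OF j]] by blast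
  have "T' \<subseteq> \<pi> ` E.reducers E.A_out j"
    using T' reducers_\<pi>[OF j cols] by simp
  then obtain T where T: "T \<subseteq> E.reducers E.A_out j" and T'_eq: "T' = \<pi> ` T"
    by (rule subset_imageE)
  have T_range: "T \<subseteq> {1..n}" and T_earlier: "\<And>s. s \<in> T \<Longrightarrow> 1 \<le> s \<and> s < j"
    using T E.reducers_in_range unfolding E.reducers_def by auto
  have "inj_on \<pi> T"
    using T_range by (rule inj_on_subset[OF inj_on_\<pi>])
  then have "col_sum E'.A_out T' (\<pi> i) = col_sum E.A_out T i" if "i \<in> {1..n}" for i
    unfolding T'_eq using T_earlier cols that by (intro col_sum_image) auto
  then show ?thesis
    using T T_range col' \<pi>_in bdry_matrix_\<pi>[OF _ j] by (intro exI[of _ T]) (auto intro: finite_subset)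
qed

lemma conmat_out_col_\<pi>:
  assumes j: "j \<in> {1..n}" and i: "i \<in> {1..n}"
    and cols: "\<And>s i. 1 \<le> s \<Longrightarrow> s < j \<Longrightarrow> i \<in> {1..n} \<Longrightarrow> E.A_out i s = E'.A_out (\<pi> i) (\<pi> s)"
  shows "E.A_out i j = E'.A_out (\<pi> i) (\<pi> j)"
proof -
  let ?H = "E.reducers E.A_out j"
  obtain T where T: "T \<subseteq> ?H" "finite T"
      and col: "\<And>i. i \<in> {1..n} \<Longrightarrow> E.A_out i j = (E.A i j \<noteq> col_sum E.A_out T i)"
    using E.conmat_out_col_sum[OF j] by blast
  obtain T0 where T0: "T0 \<subseteq> ?H" "finite T0"
      and col': "\<And>i. i \<in> {1..n} \<Longrightarrow> E'.A_out (\<pi> i) (\<pi> j) = (E.A i j \<noteq> col_sum E.A_out T0 i)"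
    using conmat_out_col_\<pi>_sum[OF j cols] by blast
  have "T = T0"
  proof (rule col_sum_determined_on_pivots[of ?H n E.A_out])
    show "\<And>s. s \<in> ?H \<Longrightarrow> \<exists>i\<in>{1..n}. E.A_out i s"
      unfolding E.reducers_def homogeneous_def by blast
    show "inj_on (low n E.A_out) ?H"
      using E.inj_on_low_homogeneous by (rule inj_on_subset) (auto simp: E.reducers_def)
    fix s assume s: "s \<in> ?H"
    then have "low n E.A_out s \<in> E.pivots E.A_out j"
      unfolding E.reducers_def E.pivots_def by auto
    then show "col_sum E.A_out T (low n E.A_out s) = col_sum E.A_out T0 (low n E.A_out s)"
      using col col' E.conmat_out_pivot_free[OF j] E'.conmat_out_pivot_free[OF \<pi>_in[OF j]]
        pivots_\<pi>[OF j cols s] E.pivots_in_range by metis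
  qed (use T T0 in auto)
  then show ?thesis
    using col[OF i] col'[OF i] by simp
qed

lemma conmat_out_\<pi>: "j \<in> {1..n} \<Longrightarrow> i \<in> {1..n} \<Longrightarrow> E.A_out i j = E'.A_out (\<pi> i) (\<pi> j)"
proof (induction j arbitrary: i rule: less_induct)
  case (less j)
  then show ?case
    using conmat_out_col_\<pi> by simp
qed

lemma conmat_J_\<pi>:
  assumes c: "c \<in> conmat_J n P M e E.A"
  shows "\<pi> c \<in> conmat_J n P M e' E'.A"
proof -
  have c_range: "c \<in> {1..n}" and not_hom: "\<not> homogeneous n P M e E.A_out c"
    and not_pivot: "\<And>h. homogeneous n P M e E.A_out h \<Longrightarrow> low n E.A_out h \<noteq> c"
    using c unfolding conmat_J_def Let_def J_h_def J_t_def by auto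
  have "\<pi> c \<notin> J_h n P M e' E'.A_out"
    using homogeneous_\<pi>[OF c_range] conmat_out_\<pi> c_range not_hom unfolding J_h_def by blast
  moreover have "\<pi> c \<notin> J_t n P M e' E'.A_out"
  proof
    assume "\<pi> c \<in> J_t n P M e' E'.A_out"
    then obtain h' where hom': "homogeneous n P M e' E'.A_out h'" and "low n E'.A_out h' = \<pi> c"
      unfolding J_t_def by (metis imageE mem_Collect_eq)
    obtain h where h: "h \<in> {1..n}" "h' = \<pi> h"
      using hom' \<pi>_surj unfolding homogeneous_def by blast
    then have hom: "homogeneous n P M e E.A_out h"
      using homogeneous_\<pi> conmat_out_\<pi> hom' by blast
    then have "\<exists>i\<in>{1..n}. E.A_out i h"
      unfolding homogeneous_def by blast
    then have "low n E.A_out h \<in> {1..n}"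
      by (rule low_in_range)
    moreover have "\<pi> (low n E.A_out h) = \<pi> c"
      using low_\<pi>[OF h(1) conmat_out_\<pi>[OF h(1)] hom] h(2) \<open>low n E'.A_out h' = \<pi> c\<close> by simp
    ultimately show False
      using not_pivot[OF hom] \<pi>_inj c_range by blast
  qed
  ultimately show ?thesis
    using \<pi>_in[OF c_range] unfolding conmat_J_def Let_def by blast
qed

end

theorem theorem3:
  fixes K :: "'v set set" and \<V> :: "'v set set set"
    and P :: "'p set" and le :: "'p \<Rightarrow> 'p \<Rightarrow> bool" and M :: "'p \<Rightarrow> 'v set set"
    and e e' :: "nat \<Rightarrow> 'v set" and i j i' j' :: nat
  assumes "simplicial_complex K"
    and "multivector_field K \<V>"
    and "morse_decomposition K \<V> P le M"
    and "admissible_enum K P le M e"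
    and "admissible_enum K P le M e'"
    and "morse_fixed K P M e e'"
    and "i \<in> conmat_J (card K) P M e (bdry_matrix (card K) e)"
    and "j \<in> conmat_J (card K) P M e (bdry_matrix (card K) e)"
    and "i' \<in> {1..card K}" and "j' \<in> {1..card K}"
    and "e' i' = e i" and "e' j' = e j"
  shows "i' \<in> conmat_J (card K) P M e' (bdry_matrix (card K) e') \<and>
         j' \<in> conmat_J (card K) P M e' (bdry_matrix (card K) e') \<and>
         conmat_S (card K) P M e (bdry_matrix (card K) e) i j =
         conmat_S (card K) P M e' (bdry_matrix (card K) e') i' j'"
proof -
  interpret morse_fixed_pair K \<V> P le M e e'
    using assms(3-6)
    by (simp add: morse_fixed_pair_def morse_fixed_pair_axioms_def admissible_enumeration_def)
  have J_range: "c \<in> conmat_J n P M e E.A \<Longrightarrow> c \<in> {1..n}" for c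
    unfolding conmat_J_def Let_def by blast
  have "inj_on e' {1..n}"
    using E'.bij_enum by (rule bij_betw_imp_inj_on)
  then have "i' = \<pi> i" "j' = \<pi> j"
    using assms(7-12) J_range \<pi>_in e'_\<pi> by (metis inj_onD)+
  then show ?thesis
    using assms(7,8) J_range conmat_J_\<pi> conmat_out_\<pi> unfolding conmat_S_def by simp
qed

end
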